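(* Let $\mathbf M$ be an $(N+1,k)$-admissible and micro-reversible matrix with core $\widetilde{\mathbf M}$ and characteristic triple $(\mu,\widetilde{\mathbf w},\widetilde{\mathbf z})$, let $\mathbf K:=\frac1\mu\operatorname{diag}(\widetilde{\mathbf w})^{-1}\widetilde{\mathbf M}^\dagger\operatorname{diag}(\widetilde{\mathbf w})$ and $\boldsymbol\pi:=\widetilde{\mathbf w}\circ\widetilde{\mathbf z}$. Let $\widetilde{\mathbf p}:[0,\infty)\to\mathbb R^{N+1-k}$ solve $\frac{d\widetilde{\mathbf p}}{dt}=(\widetilde{\mathbf M}-\mathbf I)\widetilde{\mathbf p}$ with $\widetilde{\mathbf p}(0)$ nonnegative and nonzero, and define $$\mathbf q(t):=\frac{\widetilde{\mathbf w}\circ\widetilde{\mathbf p}(t/\mu)}{\langle\widetilde{\mathbf w},\widetilde{\mathbf p}(t/\mu)\rangle},\qquad \mathbf Q(t):=\Big(\frac{q_i(t)}{\pi_i}\Big)_i .$$ Then $\langle\widetilde{\mathbf w},\widetilde{\mathbf p}(t)\rangle\neq0$ for all $t$, $\mathbf q$ solves $\frac{d\mathbf q}{dt}=(\mathbf K^\dagger-\mathbf I)\mathbf q$, $\mathbf Q$ solves $\frac{d\mathbf Q}{dt}=(\mathbf K-\mathbf I)\mathbf Q$, and $\langle\mathbf Q(t),\boldsymbol\pi\rangle=\langle\mathbf q(t),\mathbf 1\rangle=1$ for all $t$.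
   Context: Matrices are column-stochastic unless said otherwise; $\dagger$ is transpose, $\circ$ the entrywise product, $\operatorname{diag}(\mathbf a)$ the diagonal matrix with diagonal $\mathbf a$, $\mathbf 1$ the all-ones vector. For $1\le k<N-1$, an $(N+1)\times(N+1)$ column-stochastic $\mathbf M$ is $(N+1,k)$-admissible if, after a simultaneous permutation of rows and columns, $\mathbf M=\begin{pmatrix}\widetilde{\mathbf M}&\mathbf 0\\ \mathbf A&\mathbf I\end{pmatrix}$ with $\mathbf I$ the $k\times k$ identity, $\widetilde{\mathbf M}$ an irreducible $(N+1-k)\times(N+1-k)$ matrix (the core, acting on the transient states), and $\mathbf A$ a $k\times(N+1-k)$ matrix with no zero row. The characteristic triple $(\mu,\widetilde{\mathbf w},\widetilde{\mathbf z})$ consists of $\mu=\rho(\widetilde{\mathbf M})\in(0,1)$ and the positive left and right eigenvectors $\widetilde{\mathbf w},\widetilde{\mathbf z}$ of $\widetilde{\mathbf M}$ for $\mu$ normalised by $\langle\widetilde{\mathbf w},\mathbf 1\rangle=\langle\widetilde{\mathbf w},\widetilde{\mathbf z}\rangle=1$. $\mathbf M$ is micro-reversible if $\widetilde w_i\widetilde M_{ij}\widetilde z_j=\widetilde w_j\widetilde M_{ji}\widetilde z_i$ for all $i,j$. *)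

theory Defs
  imports "HOL-Analysis.Analysis"
begin

definition column_stochastic :: "real^'n^'n \<Rightarrow> bool" where
  "column_stochastic M \<longleftrightarrow>
     (\<forall>i j. 0 \<le> M $ i $ j) \<and> (\<forall>j. (\<Sum>i\<in>UNIV. M $ i $ j) = 1)"

definition irreducible_mat :: "real^'n^'n \<Rightarrow> bool" where
  "irreducible_mat M \<longleftrightarrow> (\<forall>i j. (i, j) \<in> {(a, b). M $ a $ b \<noteq> 0}\<^sup>+)"

definition cmat :: "real^'n^'n \<Rightarrow> complex^'n^'n" where
  "cmat M = (\<chi> i j. complex_of_real (M $ i $ j))"

definition spectral_radius_mat :: "real^'n^'n \<Rightarrow> real" where
  "spectral_radius_mat M =
     Max {cmod l | l. \<exists>v :: complex^'n. v \<noteq> 0 \<and> cmat M *v v = l *s v}"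

text \<open>The matrix M, indexed by transient states (Inl) followed by absorbing states (Inr),
  has the block form  [[Mcore, 0], [A, I]]  (already simultaneously permuted).\<close>
definition core :: "real^('t::finite + 'a::finite)^('t + 'a) \<Rightarrow> real^'t^'t" where
  "core M = (\<chi> i j. M $ Inl i $ Inl j)"

definition admissible :: "nat \<Rightarrow> nat \<Rightarrow> real^('t::finite + 'a::finite)^('t + 'a) \<Rightarrow> bool" where
  "admissible N k M \<longleftrightarrow>
     CARD('t + 'a) = N + 1 \<and> CARD('a) = k \<and> 1 \<le> k \<and> k < N - 1 \<and>
     column_stochastic M \<and>
     (\<forall>i b. M $ Inl i $ Inr b = 0) \<and>
     (\<forall>a b. M $ Inr a $ Inr b = (if a = b then 1 else 0)) \<and>
     irreducible_mat (core M) \<and>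
     (\<forall>a. \<exists>j. M $ Inr a $ Inl j \<noteq> 0)"

definition char_triple :: "real^'t^'t \<Rightarrow> real \<Rightarrow> real^'t \<Rightarrow> real^'t \<Rightarrow> bool" where
  "char_triple Mc \<mu> w z \<longleftrightarrow>
     \<mu> = spectral_radius_mat Mc \<and> 0 < \<mu> \<and> \<mu> < 1 \<and>
     (\<forall>i. 0 < w $ i) \<and> (\<forall>i. 0 < z $ i) \<and>
     transpose Mc *v w = \<mu> *\<^sub>R w \<and> Mc *v z = \<mu> *\<^sub>R z \<and>
     (\<Sum>i\<in>UNIV. w $ i) = 1 \<and> w \<bullet> z = 1"

definition micro_reversible :: "real^'t^'t \<Rightarrow> real^'t \<Rightarrow> real^'t \<Rightarrow> bool" where
  "micro_reversible Mc w z \<longleftrightarrow>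
     (\<forall>i j. w $ i * Mc $ i $ j * z $ j = w $ j * Mc $ j $ i * z $ i)"

end

theory Submission
  imports Defs
begin

(* The pairing S(t) = <w, p(t)> with the left Perron eigenvector w of the core M
   satisfies S' = (mu - 1) S, so S(t) = exp((mu - 1) t) S(0) > 0.  After rescaling time
   by mu and normalising by S, P(t) = p(t/mu) / S(t/mu) solves P' = (M/mu - I) P.
   Now q = diag(w) P and Q = diag(1/z) P: diag(w) intertwines M/mu with the transpose
   of K by the very definition of K, and diag(1/z) intertwines M/mu with K precisely
   because M is micro-reversible. *)

definition diag_mat :: "real^'n \<Rightarrow> real^'n^'n" where
  "diag_mat d = (\<chi> i j. if i = j then d $ i else 0)"

lemma diag_mat_mult_vector: "diag_mat d *v x = (\<chi> i. d $ i * x $ i)"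
  by (simp add: vec_eq_iff diag_mat_def matrix_vector_mult_def
      if_distrib[of "\<lambda>a. a * y" for y] cong: if_cong)

lemma matrix_mul_diag_mat_component: "(A ** diag_mat d) $ i $ j = A $ i $ j * d $ j"
  by (simp add: diag_mat_def matrix_matrix_mult_def
      if_distrib[of "\<lambda>a. y * a" for y] cong: if_cong)

lemma diag_mat_mul_component: "(diag_mat d ** A) $ i $ j = d $ i * A $ i $ j"
  by (simp add: diag_mat_def matrix_matrix_mult_def
      if_distrib[of "\<lambda>a. a * y" for y] cong: if_cong)

lemma transpose_diff: "transpose (A - B) = transpose A - transpose B"
  by (simp add: vec_eq_iff transpose_def)

lemma inner_pos_if_pos_nonneg_nonzero:
  fixes w x :: "real^'n"
  assumes "\<And>i. 0 < w $ i" and "\<And>i. 0 \<le> x $ i" and "x \<noteq> 0"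
  shows "0 < w \<bullet> x"
proof -
  obtain i where "x $ i \<noteq> 0"
    using assms(3) by (auto simp: vec_eq_iff)
  with assms have pos: "0 < w $ i * x $ i"
    by (simp add: order_less_le)
  show ?thesis
    unfolding inner_vec_def inner_real_def
    by (rule sum_pos2[of UNIV i "\<lambda>j. w $ j * x $ j", OF _ _ pos])
      (use assms in \<open>auto intro!: mult_nonneg_nonneg simp: less_imp_le\<close>)
qed

lemma left_eigenvector_inner_has_derivative:
  fixes x :: "real \<Rightarrow> real^'n"
  assumes "(x has_vector_derivative A *v x t) (at t within s)"
    and "transpose A *v w = \<kappa> *\<^sub>R w"
  shows "((\<lambda>t. w \<bullet> x t) has_real_derivative \<kappa> * (w \<bullet> x t)) (at t within s)"
proof -
  have "w \<bullet> (A *v y) = \<kappa> * (w \<bullet> y)" for y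
    using assms(2) by (metis dot_lmul_matrix inner_scaleR_left transpose_matrix_vector)
  then show ?thesis
    using bounded_linear.has_vector_derivative[OF bounded_linear_inner_right assms(1), of w]
    by (simp add: has_real_derivative_iff_has_vector_derivative)
qed

lemma linear_scalar_ode_eq_exp:
  assumes "\<And>t. t \<ge> 0 \<Longrightarrow> (f has_real_derivative a * f t) (at t within {0..})"
    and "t \<ge> 0"
  shows "f t = exp (a * t) * f 0"
proof -
  define g where "g t = exp (- a * t) * f t" for t
  have "(g has_real_derivative 0) (at s within {0..})" if "s \<in> {0..}" for s
  proof -
    have "(g has_real_derivative exp (- a * s) * (- a) * f s + exp (- a * s) * (a * f s))
        (at s within {0..})"
      unfolding g_def using that by (auto intro!: derivative_eq_intros assms(1))
    then show ?thesis
      by (simp add: algebra_simps)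
  qed
  then have "g t = g 0"
    using has_field_derivative_zero_constant[of "{0::real..}" g] assms(2)
    by (metis atLeast_iff convex_real_interval(1) order_refl)
  then show ?thesis
    by (simp add: g_def exp_minus field_simps)
qed

lemma has_vector_derivative_time_rescaled:
  fixes x :: "real \<Rightarrow> real^'n"
  assumes "c > 0"
    and "\<And>s. s \<ge> 0 \<Longrightarrow> (x has_vector_derivative A *v x s) (at s within {0..})"
    and "t \<ge> 0"
  shows "((\<lambda>t. x (t / c)) has_vector_derivative ((1 / c) *\<^sub>R A) *v x (t / c))
           (at t within {0..})"
proof -
  have "((\<lambda>t. t / c) has_vector_derivative 1 / c) (at t within {0..})"
    using assms(1)
    by (auto intro!: derivative_eq_intros
        simp flip: has_real_derivative_iff_has_vector_derivative)
  moreover have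
    "(x has_vector_derivative A *v x (t / c)) (at (t / c) within (\<lambda>t. t / c) ` {0..})"
    by (rule has_vector_derivative_within_subset[OF assms(2)]) (use assms in auto)
  ultimately show ?thesis
    using vector_diff_chain_within by (fastforce simp: o_def scaleR_matrix_vector_assoc)
qed

lemma normalized_linear_ode_has_derivative:
  fixes x :: "real \<Rightarrow> real^'n"
  assumes "(x has_vector_derivative A *v x t) (at t within s)"
    and "transpose A *v w = \<kappa> *\<^sub>R w"
    and "w \<bullet> x t \<noteq> 0"
  shows "((\<lambda>t. x t /\<^sub>R (w \<bullet> x t)) has_vector_derivative
           (A - \<kappa> *\<^sub>R mat 1) *v (x t /\<^sub>R (w \<bullet> x t))) (at t within s)"
proof -
  have "((\<lambda>t. inverse (w \<bullet> x t)) has_real_derivative - \<kappa> / (w \<bullet> x t))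
      (at t within s)"
    using DERIV_inverse_fun[OF left_eigenvector_inner_has_derivative[OF assms(1,2)] assms(3)]
      assms(3)
    by (simp add: power2_eq_square field_simps)
  from has_vector_derivative_scaleR[OF this assms(1)] show ?thesis
    by (simp add: matrix_vector_mult_diff_rdistrib scaleR_matrix_vector_assoc[symmetric]
        matrix_scaleR_vector_ac divide_inverse algebra_simps)
qed

lemma conjugated_linear_ode_has_derivative:
  fixes P :: "real \<Rightarrow> real^'n"
  assumes "(P has_vector_derivative (A - mat 1) *v P t) F"
    and "B ** D = D ** A"
  shows "((\<lambda>t. D *v P t) has_vector_derivative (B - mat 1) *v (D *v P t)) F"
proof -
  have "D *v ((A - mat 1) *v y) = (B - mat 1) *v (D *v y)" for y
  proof -
    have "(B - mat 1) *v (D *v y) = (B ** D) *v y - D *v y"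
      unfolding matrix_vector_mult_diff_rdistrib by (simp add: matrix_vector_mul_assoc)
    also have "\<dots> = D *v ((A - mat 1) *v y)"
      by (simp add: assms(2) matrix_vector_mult_diff_rdistrib matrix_vector_mult_diff_distrib
          flip: matrix_vector_mul_assoc)
    finally show ?thesis ..
  qed
  then show ?thesis
    using bounded_linear.has_vector_derivative[OF matrix_vector_mul_bounded_linear assms(1), of D]
    by simp
qed

lemma left_eigenvector_shift:
  fixes A :: "real^'n^'n"
  assumes "transpose A *v w = \<kappa> *\<^sub>R w"
  shows "transpose (A - mat 1) *v w = (\<kappa> - 1) *\<^sub>R w"
  using assms
  by (simp add: transpose_diff transpose_mat matrix_vector_mult_diff_rdistrib scaleR_diff_left)

lemma left_eigenvector_inner_pos:
  fixes x :: "real \<Rightarrow> real^'n"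
  assumes "\<And>t. t \<ge> 0 \<Longrightarrow> (x has_vector_derivative A *v x t) (at t within {0..})"
    and "transpose A *v w = \<kappa> *\<^sub>R w"
    and "\<And>i. 0 < w $ i" and "\<And>i. 0 \<le> x 0 $ i" and "x 0 \<noteq> 0"
    and "t \<ge> 0"
  shows "0 < w \<bullet> x t"
proof -
  have "w \<bullet> x t = exp (\<kappa> * t) * (w \<bullet> x 0)"
    using linear_scalar_ode_eq_exp[OF left_eigenvector_inner_has_derivative[OF assms(1,2)]]
      assms(6)
    by blast
  then show ?thesis
    using inner_pos_if_pos_nonneg_nonzero[OF assms(3-5)] by simp
qed

lemma normalized_rescaled_linear_ode_has_derivative:
  fixes x :: "real \<Rightarrow> real^'n"
  assumes "\<mu> > 0" and "transpose A *v w = \<mu> *\<^sub>R w"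
    and "\<And>t. t \<ge> 0 \<Longrightarrow>
           (x has_vector_derivative (A - mat 1) *v x t) (at t within {0..})"
    and "\<And>t. t \<ge> 0 \<Longrightarrow> w \<bullet> x t \<noteq> 0"
    and "t \<ge> 0"
  shows "((\<lambda>t. x (t / \<mu>) /\<^sub>R (w \<bullet> x (t / \<mu>))) has_vector_derivative
           ((1 / \<mu>) *\<^sub>R A - mat 1) *v (x (t / \<mu>) /\<^sub>R (w \<bullet> x (t / \<mu>))))
           (at t within {0..})"
proof -
  have eigen: "transpose ((1 / \<mu>) *\<^sub>R (A - mat 1)) *v w = ((\<mu> - 1) / \<mu>) *\<^sub>R w"
    using left_eigenvector_shift[OF assms(2)]
    by (simp add: transpose_scalar scaleR_matrix_vector_assoc[symmetric])
  have generator: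
    "(1 / \<mu>) *\<^sub>R (A - mat 1) - ((\<mu> - 1) / \<mu>) *\<^sub>R mat 1 = (1 / \<mu>) *\<^sub>R A - mat 1"
    using assms(1) by (simp add: vec_eq_iff mat_def field_simps)
  have "w \<bullet> x (t / \<mu>) \<noteq> 0"
    using assms(1,4,5) by simp
  from normalized_linear_ode_has_derivative[OF
      has_vector_derivative_time_rescaled[OF assms(1,3,5)] eigen this]
  show ?thesis
    unfolding generator .
qed

definition reversed_kernel :: "real^'n^'n \<Rightarrow> real \<Rightarrow> real^'n \<Rightarrow> real^'n^'n" where
  "reversed_kernel Mc \<mu> w = (\<chi> i j. (1 / \<mu>) * (w $ j / w $ i) * Mc $ j $ i)"

lemma transpose_reversed_kernel_intertwines:
  assumes "\<And>i. w $ i \<noteq> 0"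
  shows "transpose (reversed_kernel Mc \<mu> w) ** diag_mat w
           = diag_mat w ** ((1 / \<mu>) *\<^sub>R Mc)"
  using assms
  by (simp add: vec_eq_iff matrix_mul_diag_mat_component diag_mat_mul_component
      reversed_kernel_def transpose_def)

lemma reversed_kernel_intertwines:
  assumes "micro_reversible Mc w z" and "\<And>i. w $ i \<noteq> 0" and "\<And>i. z $ i \<noteq> 0"
  shows "reversed_kernel Mc \<mu> w ** diag_mat (\<chi> i. 1 / z $ i)
           = diag_mat (\<chi> i. 1 / z $ i) ** ((1 / \<mu>) *\<^sub>R Mc)"
proof -
  have "(1 / \<mu>) * (w $ j / w $ i) * Mc $ j $ i * (1 / z $ j)
          = (1 / z $ i) * ((1 / \<mu>) * Mc $ i $ j)" for i j
    using assms unfolding micro_reversible_def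
    by (cases "\<mu> = 0") (simp_all add: field_simps)
  then show ?thesis
    by (simp add: vec_eq_iff matrix_mul_diag_mat_component diag_mat_mul_component
        reversed_kernel_def)
qed

theorem lemma4:
  fixes M :: "real^('t::finite + 'a::finite)^('t + 'a)"
    and N k :: nat and \<mu> :: real and w z :: "real^'t"
    and p :: "real \<Rightarrow> real^'t"
    and K :: "real^'t^'t" and \<pi> :: "real^'t"
    and q Q :: "real \<Rightarrow> real^'t"
  assumes adm: "admissible N k M"
    and triple: "char_triple (core M) \<mu> w z"
    and mrev: "micro_reversible (core M) w z"
    and K_def: "K = (\<chi> i j. (1 / \<mu>) * (w $ j / w $ i) * core M $ j $ i)"
    and pi_def: "\<pi> = (\<chi> i. w $ i * z $ i)"
    and ode: "\<And>t. t \<ge> 0 \<Longrightarrow>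
               (p has_vector_derivative ((core M - mat 1) *v p t)) (at t within {0..})"
    and p0_nonneg: "\<And>i. p 0 $ i \<ge> 0"
    and p0_nonzero: "p 0 \<noteq> 0"
    and q_def: "\<And>t. q t = (\<chi> i. w $ i * p (t / \<mu>) $ i) /\<^sub>R (w \<bullet> p (t / \<mu>))"
    and Q_def: "\<And>t. Q t = (\<chi> i. q t $ i / \<pi> $ i)"
  shows "(\<forall>t\<ge>0. w \<bullet> p t \<noteq> 0)
       \<and> (\<forall>t\<ge>0. (q has_vector_derivative ((transpose K - mat 1) *v q t)) (at t within {0..}))
       \<and> (\<forall>t\<ge>0. (Q has_vector_derivative ((K - mat 1) *v Q t)) (at t within {0..}))
       \<and> (\<forall>t\<ge>0. Q t \<bullet> \<pi> = 1 \<and> (\<Sum>i\<in>UNIV. q t $ i) = 1)"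
proof -
  define P where "P t = p (t / \<mu>) /\<^sub>R (w \<bullet> p (t / \<mu>))" for t
  have \<mu>_pos: "0 < \<mu>" and w_pos: "\<And>i. 0 < w $ i" and z_pos: "\<And>i. 0 < z $ i"
    and eigen: "transpose (core M) *v w = \<mu> *\<^sub>R w"
    using triple by (auto simp: char_triple_def)
  then have w_nz: "\<And>i. w $ i \<noteq> 0" and z_nz: "\<And>i. z $ i \<noteq> 0"
    by (metis less_irrefl)+
  have inner_pos: "0 < w \<bullet> p t" if "t \<ge> 0" for t
    using left_eigenvector_inner_pos[OF ode left_eigenvector_shift[OF eigen]
        w_pos p0_nonneg p0_nonzero that] .
  then have inner_nz: "\<And>t. t \<ge> 0 \<Longrightarrow> w \<bullet> p t \<noteq> 0"
    by (metis less_irrefl)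
  have P_ode:
    "(P has_vector_derivative ((1 / \<mu>) *\<^sub>R core M - mat 1) *v P t) (at t within {0..})"
    if "t \<ge> 0" for t
    unfolding P_def
    by (rule normalized_rescaled_linear_ode_has_derivative[OF \<mu>_pos eigen ode inner_nz that])
  have q_eq: "q = (\<lambda>t. diag_mat w *v P t)"
    by (simp add: fun_eq_iff q_def P_def diag_mat_mult_vector vec_eq_iff)
  have Q_eq: "Q = (\<lambda>t. diag_mat (\<chi> i. 1 / z $ i) *v P t)"
    using w_nz
    by (simp add: fun_eq_iff Q_def q_def P_def pi_def diag_mat_mult_vector vec_eq_iff)
  have K_eq: "K = reversed_kernel (core M) \<mu> w"
    by (simp add: K_def reversed_kernel_def)
  have "(\<Sum>i\<in>UNIV. q t $ i) = 1" if "t \<ge> 0" for t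
    using inner_pos[of "t / \<mu>"] \<mu>_pos that
    by (simp add: q_def inner_vec_def sum_distrib_left[symmetric])
  moreover have "Q t \<bullet> \<pi> = (\<Sum>i\<in>UNIV. q t $ i)" for t
    using w_nz z_nz by (simp add: Q_def pi_def inner_vec_def)
  ultimately show ?thesis
    using inner_nz
      conjugated_linear_ode_has_derivative[OF P_ode transpose_reversed_kernel_intertwines[OF w_nz]]
      conjugated_linear_ode_has_derivative[OF P_ode reversed_kernel_intertwines[OF mrev w_nz z_nz]]
    unfolding q_eq Q_eq K_eq by auto
qed

end
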